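(* Let $(\mathcal S,\mathcal A,P,r)$ be any finite MDP (general/multichain) and $(g^\star,h^\star)$ a solution of the modified Bellman equations. Let $V^0\in\mathbb R^n$, let $0<\lambda_j<1$ for $j\ge1$ with $\limsup_j\lambda_j<1$, let $V^k=\lambda_kV^{k-1}+(1-\lambda_k)TV^{k-1}$ for $k\ge1$, and let $\pi_k$ be greedy policies, $T^{\pi_k}V^k=TV^k$. Then there exists an integer $K\ge0$ such that $\mathcal P^{\pi_k}g^\star=g^\star$ for all $k\ge K$; taking $K$ to be the minimal such integer, for every $k>K$, \[\|g^\star-g^{\pi_k}\|_\infty\le\|TV^k-V^k-g^\star\|_\infty\le\frac{2\|V^0-h^\star\|_\infty}{\sqrt{\varpi\sum_{i=K+1}^k\lambda_i(1-\lambda_i)}},\] where $\varpi=3.141592\ldots$ is the circle constant.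
   Context: An MDP $(\mathcal S,\mathcal A,P,r)$ has finite state space $\mathcal S$ ($|\mathcal S|=n$, functions identified with $\mathbb R^n$), finite action space, transition probabilities $P(s'\mid s,a)$ and bounded reward $r$. For a policy $\pi$: $r^\pi(s)=\sum_a\pi(a\mid s)r(s,a)$, $\mathcal P^\pi(s,s')=\sum_a\pi(a\mid s)P(s'\mid s,a)$, $g^\pi(s)=\liminf_{T\to\infty}\frac1T\mathbb E_\pi[\sum_{t=0}^{T-1}r(s_t,a_t)\mid s_0=s]$, $g^\star=\max_\pi g^\pi$. $T^\pi V=r^\pi+\mathcal P^\pi V$, $(TV)(s)=\max_a\{r(s,a)+\sum_{s'}P(s'\mid s,a)V(s')\}$. A pair $(g,h)$ solves the modified Bellman equations if $\max_a\sum_{s'}P(s'\mid s,a)g(s')=g(s)$ and $\max_a\{r(s,a)+\sum_{s'}P(s'\mid s,a)h(s')\}=h(s)+g(s)$ for all $s$, with some policy attaining both maxima simultaneously; the first component of any solution equals $g^\star$. *)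

theory Defs
  imports "HOL-Analysis.Analysis"
begin

text \<open>A (stationary, possibly randomized)
  policy is \<sigma> s a = probability of action a in state s. Vectors in R^n are
  functions 's => real.\<close>

definition is_mdp :: "('s::finite \<Rightarrow> 'a::finite \<Rightarrow> 's \<Rightarrow> real) \<Rightarrow> bool" where
  "is_mdp P \<longleftrightarrow> (\<forall>s a s'. 0 \<le> P s a s') \<and> (\<forall>s a. (\<Sum>s'\<in>UNIV. P s a s') = 1)"

definition is_policy :: "('s::finite \<Rightarrow> 'a::finite \<Rightarrow> real) \<Rightarrow> bool" where
  "is_policy \<sigma> \<longleftrightarrow> (\<forall>s a. 0 \<le> \<sigma> s a) \<and> (\<forall>s. (\<Sum>a\<in>UNIV. \<sigma> s a) = 1)"

definition r_pol :: "('s::finite \<Rightarrow> 'a::finite \<Rightarrow> real) \<Rightarrow> ('s \<Rightarrow> 'a \<Rightarrow> real) \<Rightarrow> 's \<Rightarrow> real" where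
  "r_pol r \<sigma> s = (\<Sum>a\<in>UNIV. \<sigma> s a * r s a)"

definition P_pol :: "('s::finite \<Rightarrow> 'a::finite \<Rightarrow> 's \<Rightarrow> real) \<Rightarrow> ('s \<Rightarrow> 'a \<Rightarrow> real)
    \<Rightarrow> ('s \<Rightarrow> real) \<Rightarrow> 's \<Rightarrow> real" where
  "P_pol P \<sigma> v s = (\<Sum>s'\<in>UNIV. (\<Sum>a\<in>UNIV. \<sigma> s a * P s a s') * v s')"

definition T_pol :: "('s::finite \<Rightarrow> 'a::finite \<Rightarrow> 's \<Rightarrow> real) \<Rightarrow> ('s \<Rightarrow> 'a \<Rightarrow> real)
    \<Rightarrow> ('s \<Rightarrow> 'a \<Rightarrow> real) \<Rightarrow> ('s \<Rightarrow> real) \<Rightarrow> 's \<Rightarrow> real" where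
  "T_pol P r \<sigma> V s = r_pol r \<sigma> s + P_pol P \<sigma> V s"

definition T_opt :: "('s::finite \<Rightarrow> 'a::finite \<Rightarrow> 's \<Rightarrow> real) \<Rightarrow> ('s \<Rightarrow> 'a \<Rightarrow> real)
    \<Rightarrow> ('s \<Rightarrow> real) \<Rightarrow> 's \<Rightarrow> real" where
  "T_opt P r V s = (MAX a. r s a + (\<Sum>s'\<in>UNIV. P s a s' * V s'))"

text \<open>Average reward (gain) of a stationary policy:
  g^\<sigma>(s) = liminf_T (1/T) sum_{t<T} E_pi[r(s_t,a_t) | s_0 = s],
  where E_pi[r(s_t,a_t) | s_0 = s] = ((P^\<sigma>)^t r^\<sigma>)(s).\<close>
definition gain :: "('s::finite \<Rightarrow> 'a::finite \<Rightarrow> 's \<Rightarrow> real) \<Rightarrow> ('s \<Rightarrow> 'a \<Rightarrow> real)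
    \<Rightarrow> ('s \<Rightarrow> 'a \<Rightarrow> real) \<Rightarrow> 's \<Rightarrow> real" where
  "gain P r \<sigma> s = real_of_ereal (liminf (\<lambda>T::nat. ereal
      ((1 / real T) * (\<Sum>t<T. ((P_pol P \<sigma> ^^ t) (r_pol r \<sigma>)) s))))"

definition mod_bellman :: "('s::finite \<Rightarrow> 'a::finite \<Rightarrow> 's \<Rightarrow> real) \<Rightarrow> ('s \<Rightarrow> 'a \<Rightarrow> real)
    \<Rightarrow> ('s \<Rightarrow> real) \<Rightarrow> ('s \<Rightarrow> real) \<Rightarrow> bool" where
  "mod_bellman P r g h \<longleftrightarrow>
     (\<forall>s. (MAX a. (\<Sum>s'\<in>UNIV. P s a s' * g s')) = g s) \<and>
     (\<forall>s. (MAX a. r s a + (\<Sum>s'\<in>UNIV. P s a s' * h s')) = h s + g s) \<and>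
     (\<exists>d::'s \<Rightarrow> 'a. \<forall>s. (\<Sum>s'\<in>UNIV. P s (d s) s' * g s') = g s \<and>
                        r s (d s) + (\<Sum>s'\<in>UNIV. P s (d s) s' * h s') = h s + g s)"

definition supnorm :: "('s::finite \<Rightarrow> real) \<Rightarrow> real" where
  "supnorm v = (MAX s. \<bar>v s\<bar>)"

end

theory Submission
  imports Defs "HOL-Probability.Probability"
begin

text \<open>Write \<open>V\<^sup>k = c\<^sub>k g + W\<^sup>k\<close> with \<open>c\<^sub>k = (1 - \<lambda>\<^sub>1) + \<dots> + (1 - \<lambda>\<^sub>k)\<close>. Since \<open>P g \<le> g\<close> for every action
  and \<open>h\<close> solves the Bellman equation, the detrended iterates \<open>W\<^sup>k\<close> never get farther from \<open>h\<close> than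
  \<open>V\<^sup>0\<close> is. As \<open>c\<^sub>k\<close> grows without bound (because \<open>limsup \<lambda>\<^sub>j < 1\<close>), an action that strictly lowers \<open>g\<close>
  eventually loses against an action optimal for \<open>h\<close>, so greedy policies eventually preserve \<open>g\<close>.
  From then on \<open>T V\<^sup>k = c\<^sub>k g + T' W\<^sup>k\<close>, where \<open>T'\<close> is the Bellman operator restricted to
  \<open>g\<close>-preserving actions; \<open>T' - g\<close> is nonexpansive in the sup norm and fixes \<open>h\<close>, so \<open>W\<^sup>k\<close> is a
  Krasnoselskii-Mann iteration of it and \<open>T V\<^sup>k - V\<^sup>k - g\<close> is its fixed-point residual. The rate
  \<open>1 / sqrt (\<pi> \<Sum> \<lambda>\<^sub>i (1 - \<lambda>\<^sub>i))\<close> comes from the recursive error bounds of Cominetti, Soto and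
  Vaisman, whose solution is a Fourier integral against \<open>\<Prod>\<^sub>i (1 - 2 \<lambda>\<^sub>i (1 - \<lambda>\<^sub>i) (1 - cos t))\<close> and
  is estimated by a Gaussian integral. Finally, for a policy with \<open>P\<^sup>\<pi> g = g\<close> the Cesaro averages
  of the rewards telescope, which bounds the gain error by the residual.\<close>

section \<open>A Gaussian estimate\<close>

lemma integral_gaussian_interval_le:
  fixes b :: real
  assumes "0 < b"
  shows "integral {-1..1} (\<lambda>u. exp (- b * u\<^sup>2)) \<le> sqrt (pi / b)"
proof -
  define \<sigma> where "\<sigma> = sqrt (1 / (2 * b))"
  have "0 < \<sigma>" and \<sigma>2: "\<sigma>\<^sup>2 = 1 / (2 * b)"
    using assms by (auto simp: \<sigma>_def)
  have density: "exp (- b * u\<^sup>2) = sqrt (pi / b) * normal_density 0 \<sigma> u" for u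
  proof -
    have "sqrt (2 * pi * \<sigma>\<^sup>2) = sqrt (pi / b)" and "- (u - 0)\<^sup>2 / (2 * \<sigma>\<^sup>2) = - b * u\<^sup>2"
      using assms by (simp_all add: \<sigma>2 field_simps)
    then show ?thesis
      using assms by (simp add: normal_density_def)
  qed
  have "set_integrable lborel {-1..1} (normal_density 0 \<sigma>)"
    unfolding set_integrable_def using \<open>0 < \<sigma>\<close>
    by (intro integrable_mult_indicator integrable_normal_density) auto
  then have "integral {-1..1} (normal_density 0 \<sigma>) = (\<integral>u. indicator {-1..1} u * normal_density 0 \<sigma> u \<partial>lborel)"
    by (simp add: set_borel_integral_eq_integral(2)[symmetric] set_lebesgue_integral_def)
  also have "\<dots> \<le> (\<integral>u. normal_density 0 \<sigma> u \<partial>lborel)"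
    using \<open>0 < \<sigma>\<close> by (intro integral_mono' integrable_normal_density) (auto simp: indicator_def)
  finally have "integral {-1..1} (normal_density 0 \<sigma>) \<le> 1"
    using \<open>0 < \<sigma>\<close> by simp
  then show ?thesis
    unfolding density using assms by (simp add: mult_left_le)
qed

lemma integral_exp_sin_half_le:
  fixes b :: real
  assumes "0 < b"
  shows "integral {-pi..pi} (\<lambda>t. exp (- b * (sin (t / 2))\<^sup>2) * (1 + cos t)) \<le> 4 * sqrt (pi / b)"
proof -
  define e where "e = (\<lambda>u::real. exp (- b * u\<^sup>2))"
  define F where "F = (\<lambda>y. integral {-1..y} e)"
  define f where "f = (\<lambda>t. e (sin (t / 2)) * (cos (t / 2) / 2))"
  \<comment> \<open>the substitution \<open>u = sin (t/2)\<close>\<close>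
  have "((F \<circ> (\<lambda>t. sin (t / 2))) has_vector_derivative f t) (at t within {-pi..pi})" for t
  proof -
    have "((\<lambda>t. sin (t / 2)) has_vector_derivative (cos (t / 2) / 2)) (at t within {-pi..pi})"
      by (auto intro!: derivative_eq_intros simp: has_real_derivative_iff_has_vector_derivative[symmetric])
    moreover have "(F has_vector_derivative e (sin (t / 2))) (at (sin (t / 2)) within {-1..1})"
      unfolding F_def e_def by (intro integral_has_vector_derivative continuous_intros) auto
    then have "(F has_vector_derivative e (sin (t / 2))) (at (sin (t / 2)) within (\<lambda>t. sin (t / 2)) ` {-pi..pi})"
      by (rule has_vector_derivative_within_subset) auto
    ultimately show ?thesis
      using vector_diff_chain_within by (fastforce simp: f_def mult.commute)
  qed
  then have "(f has_integral ((F \<circ> (\<lambda>t. sin (t / 2))) pi - (F \<circ> (\<lambda>t. sin (t / 2))) (-pi))) {-pi..pi}"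
    by (intro fundamental_theorem_of_calculus) (auto simp: o_def)
  then have f_int: "(f has_integral integral {-1..1} e) {-pi..pi}"
    by (simp add: F_def)
  have "integral {-pi..pi} (\<lambda>t. exp (- b * (sin (t / 2))\<^sup>2) * (1 + cos t)) \<le> integral {-pi..pi} (\<lambda>t. 4 * f t)"
  proof (rule integral_le)
    show "(\<lambda>t. exp (- b * (sin (t / 2))\<^sup>2) * (1 + cos t)) integrable_on {-pi..pi}"
      by (intro integrable_continuous_interval continuous_intros) auto
    show "(\<lambda>t. 4 * f t) integrable_on {-pi..pi}"
      using f_int by (intro integrable_on_mult_right has_integral_integrable)
    fix t :: real
    assume "t \<in> {-pi..pi}"
    then have "0 \<le> cos (t / 2)"
      by (intro cos_ge_zero) auto
    then have "1 + cos t \<le> 2 * cos (t / 2)"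
      using cos_double_cos[of "t / 2"] cos_le_one[of "t / 2"] by (simp add: power2_eq_square mult_left_le_one_le)
    then show "exp (- b * (sin (t / 2))\<^sup>2) * (1 + cos t) \<le> 4 * f t"
      by (simp add: f_def e_def)
  qed
  also have "\<dots> = 4 * integral {-1..1} e"
    using f_int by (simp add: integral_unique)
  also have "\<dots> \<le> 4 * sqrt (pi / b)"
    using integral_gaussian_interval_le[OF assms] by (simp add: e_def)
  finally show ?thesis .
qed

section \<open>Fourier representation of the Krasnoselskii-Mann error bounds\<close>

definition cos_pair_sum :: "nat \<Rightarrow> real \<Rightarrow> real" where
  "cos_pair_sum n t = (\<Sum>j<n. cos (real j * t) + cos (real (Suc j) * t))"

lemma cos_pair_sum_0 [simp]: "cos_pair_sum 0 t = 0"
  by (simp add: cos_pair_sum_def)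

lemma cos_pair_sum_Suc:
  "cos_pair_sum (Suc n) t = cos_pair_sum n t + cos (real n * t) + cos (real (Suc n) * t)"
  by (simp add: cos_pair_sum_def)

lemma continuous_on_cos_pair_sum: "continuous_on A (cos_pair_sum n)"
  unfolding cos_pair_sum_def by (intro continuous_intros)

lemma two_cos_mult_cos: "2 * cos (t::real) * cos (x * t) = cos ((x - 1) * t) + cos ((x + 1) * t)"
proof -
  have "cos (t - x * t) = cos ((x - 1) * t)"
    by (metis cos_minus minus_diff_eq left_diff_distrib mult_1)
  then show ?thesis
    using cos_times_cos[of t "x * t"] by (simp add: algebra_simps)
qed

lemma cos_pair_sum_recurrence:
  "2 * cos t * cos_pair_sum (Suc n) t = cos_pair_sum (Suc (Suc n)) t + cos_pair_sum n t"
proof (induction n)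
  case 0
  show ?case
    using cos_double_cos[of t] by (simp add: cos_pair_sum_Suc power2_eq_square algebra_simps)
next
  case (Suc n)
  have "2 * cos t * cos_pair_sum (Suc (Suc n)) t
      = 2 * cos t * cos_pair_sum (Suc n) t + 2 * cos t * cos ((real n + 1) * t)
        + 2 * cos t * cos ((real n + 2) * t)"
    by (simp add: cos_pair_sum_Suc[of "Suc n"] algebra_simps)
  also have "\<dots> = cos_pair_sum (Suc (Suc (Suc n))) t + cos_pair_sum (Suc n) t"
    unfolding Suc two_cos_mult_cos by (simp add: cos_pair_sum_Suc algebra_simps)
  finally show ?case .
qed

lemma has_integral_cos_nat_mult:
  "((\<lambda>t. cos (real j * t)) has_integral (if j = 0 then 2 * pi else 0)) {-pi..pi}"
proof (cases "j = 0")
  case False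
  then have "((\<lambda>t. cos (real j * t)) has_integral (sin (real j * pi) / real j - sin (real j * (-pi)) / real j)) {-pi..pi}"
    by (intro fundamental_theorem_of_calculus)
       (auto intro!: derivative_eq_intros simp: has_real_derivative_iff_has_vector_derivative[symmetric])
  then show ?thesis
    using False by simp
qed (use has_integral_const_real[of "1::real" "-pi" pi] in simp)

lemma has_integral_cos_pair_sum: "(cos_pair_sum (Suc n) has_integral 2 * pi) {-pi..pi}"
proof -
  have "(cos_pair_sum (Suc n) has_integral
          (\<Sum>j<Suc n. (if j = 0 then 2 * pi else 0) + (if Suc j = 0 then 2 * pi else 0))) {-pi..pi}"
    unfolding cos_pair_sum_def[abs_def]
    by (intro has_integral_sum has_integral_add has_integral_cos_nat_mult) auto
  then show ?thesis
    by (simp add: sum.lessThan_Suc_shift del: sum.lessThan_Suc)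
qed

text \<open>\<open>avg_kernel a p k n\<close> is the expectation of \<open>cos_pair_sum (n + X)\<close>, where \<open>X\<close> is a sum of
  independent Bernoulli variables with parameters \<open>a (p + 1), \<dots>, a (p + k)\<close>.\<close>
fun avg_kernel :: "(nat \<Rightarrow> real) \<Rightarrow> nat \<Rightarrow> nat \<Rightarrow> nat \<Rightarrow> real \<Rightarrow> real" where
  "avg_kernel a p 0 n = cos_pair_sum n"
| "avg_kernel a p (Suc k) n =
     (\<lambda>t. (1 - a (p + Suc k)) * avg_kernel a p k n t + a (p + Suc k) * avg_kernel a p k (Suc n) t)"

lemma continuous_on_avg_kernel: "continuous_on A (avg_kernel a p k n)"
  by (induction k arbitrary: n) (auto intro!: continuous_intros continuous_on_cos_pair_sum)

lemma avg_kernel_recurrence: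
  "2 * cos t * avg_kernel a p k (Suc n) t = avg_kernel a p k (Suc (Suc n)) t + avg_kernel a p k n t"
proof (induction k arbitrary: n)
  case 0
  then show ?case
    by (simp add: cos_pair_sum_recurrence)
next
  case (Suc k)
  show ?case
    using Suc[of n] Suc[of "Suc n"] by (simp add: algebra_simps)
qed

lemma avg_kernel_Suc_first:
  "avg_kernel a p (Suc k) n t
     = (1 - a (Suc p)) * avg_kernel a (Suc p) k n t + a (Suc p) * avg_kernel a (Suc p) k (Suc n) t"
proof (induction k arbitrary: n)
  case (Suc k)
  let ?b = "a (p + Suc (Suc k))"
  have "avg_kernel a p (Suc (Suc k)) n t = (1 - ?b) * avg_kernel a p (Suc k) n t + ?b * avg_kernel a p (Suc k) (Suc n) t"
    by (simp only: avg_kernel.simps)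
  also have "\<dots> = (1 - ?b) * ((1 - a (Suc p)) * avg_kernel a (Suc p) k n t + a (Suc p) * avg_kernel a (Suc p) k (Suc n) t)
      + ?b * ((1 - a (Suc p)) * avg_kernel a (Suc p) k (Suc n) t + a (Suc p) * avg_kernel a (Suc p) k (Suc (Suc n)) t)"
    by (simp only: Suc)
  also have "\<dots> = (1 - a (Suc p)) * avg_kernel a (Suc p) (Suc k) n t + a (Suc p) * avg_kernel a (Suc p) (Suc k) (Suc n) t"
    by (simp add: algebra_simps)
  finally show ?case .
qed simp

lemma has_integral_avg_kernel: "(avg_kernel a p k (Suc n) has_integral 2 * pi) {-pi..pi}"
proof (induction k arbitrary: n)
  case 0
  then show ?case
    by (simp add: has_integral_cos_pair_sum)
next
  case (Suc k)
  have "(avg_kernel a p (Suc k) (Suc n) has_integral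
          (1 - a (p + Suc k)) * (2 * pi) + a (p + Suc k) * (2 * pi)) {-pi..pi}"
    unfolding avg_kernel.simps by (intro has_integral_add has_integral_mult_right Suc)
  then show ?case
    by (simp add: algebra_simps)
qed

definition damping :: "(nat \<Rightarrow> real) \<Rightarrow> nat \<Rightarrow> real \<Rightarrow> real" where
  "damping a p t = (\<Prod>i=1..p. 1 - 2 * a i * (1 - a i) * (1 - cos t))"

lemma damping_0 [simp]: "damping a 0 t = 1"
  by (simp add: damping_def)

lemma damping_Suc: "damping a (Suc p) t = damping a p t * (1 - 2 * a (Suc p) * (1 - a (Suc p)) * (1 - cos t))"
  by (simp add: damping_def)

lemma continuous_on_damping: "continuous_on A (damping a p)"
  unfolding damping_def by (intro continuous_intros)

lemma damping_le_exp:
  assumes "\<And>i. i \<in> {1..p} \<Longrightarrow> 0 \<le> a i \<and> a i \<le> 1"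
  shows "damping a p t \<le> exp (- 4 * (\<Sum>i=1..p. a i * (1 - a i)) * (sin (t / 2))\<^sup>2)"
proof -
  have "damping a p t = (\<Prod>i=1..p. 1 - 4 * (a i * (1 - a i)) * (sin (t / 2))\<^sup>2)"
    unfolding damping_def cos_double_sin[of "t / 2", simplified] by (simp add: algebra_simps)
  also have "\<dots> \<le> (\<Prod>i=1..p. exp (- 4 * (a i * (1 - a i)) * (sin (t / 2))\<^sup>2))"
  proof (intro prod_mono conjI)
    fix i
    assume "i \<in> {1..p}"
    then have "0 \<le> a i * (1 - a i)"
      using assms[of i] by simp
    moreover have "4 * (a i * (1 - a i)) \<le> 1"
      using zero_le_power2[of "2 * a i - 1"] by (simp add: power2_eq_square algebra_simps)
    moreover have "(sin (t / 2))\<^sup>2 \<le> 1"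
      using sin_cos_squared_add[of "t / 2"] zero_le_power2[of "cos (t / 2)"] by linarith
    ultimately have "4 * (a i * (1 - a i)) * (sin (t / 2))\<^sup>2 \<le> 1"
      by (simp add: mult_le_one)
    then show "0 \<le> 1 - 4 * (a i * (1 - a i)) * (sin (t / 2))\<^sup>2"
      by simp
    show "1 - 4 * (a i * (1 - a i)) * (sin (t / 2))\<^sup>2 \<le> exp (- 4 * (a i * (1 - a i)) * (sin (t / 2))\<^sup>2)"
      using exp_ge_add_one_self[of "- 4 * (a i * (1 - a i)) * (sin (t / 2))\<^sup>2"] by simp
  qed
  also have "\<dots> = exp (- 4 * (\<Sum>i=1..p. a i * (1 - a i)) * (sin (t / 2))\<^sup>2)"
    by (simp add: exp_sum[symmetric] sum_distrib_left sum_distrib_right)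
  finally show ?thesis .
qed

text \<open>\<open>km_coeff a p m 0\<close> and \<open>km_coeff a p m 1\<close> solve the recursive bounds of Cominetti, Soto and
  Vaisman for the Krasnoselskii-Mann iteration with step sizes \<open>a\<close>: they bound
  \<open>\<parallel>x\<^sub>p - x\<^sub>m\<parallel>\<close> and \<open>\<parallel>x\<^sub>p - S x\<^sub>m\<parallel>\<close> relative to twice the initial distance to a fixed point.\<close>
definition km_coeff :: "(nat \<Rightarrow> real) \<Rightarrow> nat \<Rightarrow> nat \<Rightarrow> nat \<Rightarrow> real" where
  "km_coeff a p m n = integral {-pi..pi} (\<lambda>t. damping a p t * avg_kernel a p (m - p) n t) / (2 * pi)"

lemma km_coeff_combination:
  assumes "\<And>t. damping a q t * avg_kernel a q (l - q) k t
    = (1 - b) * (damping a p t * avg_kernel a p (m - p) n t) + b * (damping a p t * avg_kernel a p (m - p) n' t)"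
  shows "km_coeff a q l k = (1 - b) * km_coeff a p m n + b * km_coeff a p m n'"
proof -
  have integrable: "(\<lambda>t. damping a p t * avg_kernel a p (m - p) j t) integrable_on {-pi..pi}" for j
    by (intro integrable_continuous_interval continuous_on_mult continuous_on_damping continuous_on_avg_kernel)
  have "integral {-pi..pi} (\<lambda>t. damping a q t * avg_kernel a q (l - q) k t)
      = (1 - b) * integral {-pi..pi} (\<lambda>t. damping a p t * avg_kernel a p (m - p) n t)
        + b * integral {-pi..pi} (\<lambda>t. damping a p t * avg_kernel a p (m - p) n' t)"
    unfolding assms using integrable by (simp add: integral_add integrable_on_mult_right)
  then show ?thesis
    unfolding km_coeff_def by (simp add: add_divide_distrib)
qed

lemma km_coeff_start: "km_coeff a 0 m (Suc 0) = 1"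
  using has_integral_avg_kernel[of a 0 m 0] by (simp add: km_coeff_def integral_unique)

lemma km_coeff_diag: "km_coeff a p p 0 = 0"
  by (simp add: km_coeff_def)

lemma km_coeff_step_right:
  assumes "p \<le> m"
  shows "km_coeff a p (Suc m) 0 = (1 - a (Suc m)) * km_coeff a p m 0 + a (Suc m) * km_coeff a p m (Suc 0)"
proof (rule km_coeff_combination)
  have "Suc m - p = Suc (m - p)" and "p + Suc (m - p) = Suc m"
    using assms by auto
  then show "damping a p t * avg_kernel a p (Suc m - p) 0 t
      = (1 - a (Suc m)) * (damping a p t * avg_kernel a p (m - p) 0 t)
        + a (Suc m) * (damping a p t * avg_kernel a p (m - p) (Suc 0) t)" for t
    by (simp add: algebra_simps)
qed

lemma km_coeff_step_left:
  assumes "p < m"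
  shows "km_coeff a (Suc p) m (Suc 0) = (1 - a (Suc p)) * km_coeff a p m (Suc 0) + a (Suc p) * km_coeff a p m 0"
proof (rule km_coeff_combination)
  fix t
  define k where "k = m - Suc p"
  have m_p: "m - p = Suc k"
    using assms by (simp add: k_def)
  have two: "avg_kernel a (Suc p) k (Suc (Suc 0)) t
      = 2 * cos t * avg_kernel a (Suc p) k (Suc 0) t - avg_kernel a (Suc p) k 0 t"
    using avg_kernel_recurrence[of t a "Suc p" k 0] by simp
  \<comment> \<open>the new damping factor \<open>1 - 2 b (1 - b) (1 - cos t)\<close>, \<open>b = a (Suc p)\<close>, is exactly what the
    recurrence for \<open>2 cos t\<close> produces when the step \<open>b\<close> is moved from the kernel into the damping\<close>
  show "damping a (Suc p) t * avg_kernel a (Suc p) (m - Suc p) (Suc 0) t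
      = (1 - a (Suc p)) * (damping a p t * avg_kernel a p (m - p) (Suc 0) t)
        + a (Suc p) * (damping a p t * avg_kernel a p (m - p) 0 t)"
    unfolding m_p avg_kernel_Suc_first[of a p k] damping_Suc k_def[symmetric]
    by (simp add: two algebra_simps)
qed

lemma km_coeff_diag_le:
  assumes a01: "\<And>i. i \<in> {1..n} \<Longrightarrow> 0 \<le> a i \<and> a i \<le> 1"
    and pos: "0 < (\<Sum>i=1..n. a i * (1 - a i))"
  shows "km_coeff a n n (Suc 0) \<le> 1 / sqrt (pi * (\<Sum>i=1..n. a i * (1 - a i)))"
proof -
  define s where "s = (\<Sum>i=1..n. a i * (1 - a i))"
  have "integral {-pi..pi} (\<lambda>t. damping a n t * avg_kernel a n 0 (Suc 0) t)
      \<le> integral {-pi..pi} (\<lambda>t. exp (- (4 * s) * (sin (t / 2))\<^sup>2) * (1 + cos t))"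
  proof (rule integral_le)
    show "(\<lambda>t. damping a n t * avg_kernel a n 0 (Suc 0) t) integrable_on {-pi..pi}"
      by (intro integrable_continuous_interval continuous_on_mult continuous_on_damping continuous_on_avg_kernel)
    show "(\<lambda>t. exp (- (4 * s) * (sin (t / 2))\<^sup>2) * (1 + cos t)) integrable_on {-pi..pi}"
      by (intro integrable_continuous_interval continuous_intros) auto
    have "0 \<le> 1 + cos t" for t :: real
      using cos_ge_minus_one[of t] by linarith
    then show "damping a n t * avg_kernel a n 0 (Suc 0) t \<le> exp (- (4 * s) * (sin (t / 2))\<^sup>2) * (1 + cos t)" for t
      using damping_le_exp[OF a01, where t = t] by (simp add: s_def cos_pair_sum_Suc mult_right_mono)
  qed
  also have "\<dots> \<le> 4 * sqrt (pi / (4 * s))"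
    using integral_exp_sin_half_le[of "4 * s"] pos by (simp add: s_def)
  also have "\<dots> = 2 * pi * (1 / sqrt (pi * s))"
    using pos by (simp add: s_def real_sqrt_divide real_sqrt_mult field_simps)
  finally show ?thesis
    unfolding km_coeff_def s_def by (simp add: divide_le_eq mult.commute)
qed

section \<open>Krasnoselskii-Mann iterations in the sup norm\<close>

lemma abs_le_supnorm: "\<bar>v s\<bar> \<le> supnorm v"
  unfolding supnorm_def by (rule Max_ge) auto

lemma supnorm_least: "(\<And>s. \<bar>v s\<bar> \<le> M) \<Longrightarrow> supnorm v \<le> M"
  unfolding supnorm_def by (subst Max_le_iff) auto

lemma supnorm_nonneg: "0 \<le> supnorm v"
  using abs_le_supnorm[of v undefined] by linarith

lemma supnorm_zero [simp]: "supnorm (\<lambda>s. 0) = 0"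
  by (simp add: supnorm_def)

lemma supnorm_diff_commute: "supnorm (\<lambda>s. u s - v s) = supnorm (\<lambda>s. v s - u s)"
  unfolding supnorm_def by (simp add: abs_minus_commute)

lemma supnorm_convex_comb:
  assumes "0 \<le> b" "b \<le> 1"
  shows "supnorm (\<lambda>s. ((1 - b) * y s + b * w s) - z s)
    \<le> (1 - b) * supnorm (\<lambda>s. y s - z s) + b * supnorm (\<lambda>s. w s - z s)"
proof (rule supnorm_least)
  fix s
  have "\<bar>((1 - b) * y s + b * w s) - z s\<bar> = \<bar>(1 - b) * (y s - z s) + b * (w s - z s)\<bar>"
    by (simp add: algebra_simps)
  also have "\<dots> \<le> (1 - b) * \<bar>y s - z s\<bar> + b * \<bar>w s - z s\<bar>"
    using assms by (simp add: abs_triangle_ineq[THEN order_trans] abs_mult)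
  also have "\<dots> \<le> (1 - b) * supnorm (\<lambda>s. y s - z s) + b * supnorm (\<lambda>s. w s - z s)"
    using assms by (intro add_mono mult_left_mono abs_le_supnorm) auto
  finally show "\<bar>((1 - b) * y s + b * w s) - z s\<bar> \<le> \<dots>" .
qed

lemma km_error_bound:
  fixes S :: "('s::finite \<Rightarrow> real) \<Rightarrow> 's \<Rightarrow> real" and x :: "nat \<Rightarrow> 's \<Rightarrow> real"
  assumes nonexp: "\<And>u v. supnorm (\<lambda>s. S u s - S v s) \<le> supnorm (\<lambda>s. u s - v s)"
    and iter: "\<And>j. x (Suc j) = (\<lambda>s. (1 - a (Suc j)) * x j s + a (Suc j) * S (x j) s)"
    and a01: "\<And>j. 0 < j \<Longrightarrow> 0 \<le> a j \<and> a j \<le> 1"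
    and start: "\<And>m. supnorm (\<lambda>s. x 0 s - S (x m) s) \<le> 2 * R"
  shows "p \<le> m \<Longrightarrow> supnorm (\<lambda>s. x p s - S (x m) s) \<le> 2 * R * km_coeff a p m (Suc 0)
    \<and> supnorm (\<lambda>s. x p s - x m s) \<le> 2 * R * km_coeff a p m 0"
proof (induction m arbitrary: p)
  case 0
  then show ?case
    using start[of 0] by (simp add: km_coeff_start km_coeff_diag)
next
  case (Suc m)
  have step: "supnorm (\<lambda>s. x (Suc j) s - z s)
      \<le> (1 - a (Suc j)) * supnorm (\<lambda>s. x j s - z s) + a (Suc j) * supnorm (\<lambda>s. S (x j) s - z s)" for j z
    unfolding iter using a01[of "Suc j"] by (intro supnorm_convex_comb) auto
  have combine: "u \<le> 2 * R * ((1 - a (Suc j)) * \<theta> + a (Suc j) * \<theta>')"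
    if "u \<le> (1 - a (Suc j)) * v + a (Suc j) * v'" "v \<le> 2 * R * \<theta>" "v' \<le> 2 * R * \<theta>'" for u v v' \<theta> \<theta>' j
  proof -
    have "(1 - a (Suc j)) * v + a (Suc j) * v' \<le> (1 - a (Suc j)) * (2 * R * \<theta>) + a (Suc j) * (2 * R * \<theta>')"
      using that a01[of "Suc j"] by (intro add_mono mult_left_mono) auto
    with that(1) show ?thesis
      by (simp add: algebra_simps)
  qed
  have dist_iterates: "supnorm (\<lambda>s. x p s - x (Suc m) s) \<le> 2 * R * km_coeff a p (Suc m) 0"
    if "p \<le> Suc m" for p
  proof (cases "p = Suc m")
    case False
    with that have "p \<le> m"
      by simp
    have "supnorm (\<lambda>s. x p s - x (Suc m) s) = supnorm (\<lambda>s. x (Suc m) s - x p s)"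
      by (rule supnorm_diff_commute)
    also have "\<dots> \<le> (1 - a (Suc m)) * supnorm (\<lambda>s. x p s - x m s) + a (Suc m) * supnorm (\<lambda>s. x p s - S (x m) s)"
      using step[of m "x p"] by (simp only: supnorm_diff_commute[of _ "x p"])
    finally show ?thesis
      using Suc.IH[OF \<open>p \<le> m\<close>] by (simp add: km_coeff_step_right[OF \<open>p \<le> m\<close>] combine)
  qed (simp add: km_coeff_diag)
  have "supnorm (\<lambda>s. x p s - S (x (Suc m)) s) \<le> 2 * R * km_coeff a p (Suc m) (Suc 0)" if "p \<le> Suc m" for p
    using that
  proof (induction p)
    case 0
    then show ?case
      using start by (simp add: km_coeff_start)
  next
    case (Suc p)
    have "supnorm (\<lambda>s. x (Suc p) s - S (x (Suc m)) s)
        \<le> (1 - a (Suc p)) * supnorm (\<lambda>s. x p s - S (x (Suc m)) s) + a (Suc p) * supnorm (\<lambda>s. S (x p) s - S (x (Suc m)) s)"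
      by (rule step)
    also have "\<dots> \<le> (1 - a (Suc p)) * supnorm (\<lambda>s. x p s - S (x (Suc m)) s) + a (Suc p) * supnorm (\<lambda>s. x p s - x (Suc m) s)"
      using nonexp a01[of "Suc p"] by (intro add_mono mult_left_mono) auto
    finally show ?case
      using Suc dist_iterates[of p]
      by (simp add: km_coeff_step_left combine)
  qed
  with dist_iterates Suc.prems show ?case
    by blast
qed

lemma km_residual_le:
  fixes S :: "('s::finite \<Rightarrow> real) \<Rightarrow> 's \<Rightarrow> real" and x :: "nat \<Rightarrow> 's \<Rightarrow> real"
  assumes nonexp: "\<And>u v. supnorm (\<lambda>s. S u s - S v s) \<le> supnorm (\<lambda>s. u s - v s)"
    and iter: "\<And>j. x (Suc j) = (\<lambda>s. (1 - a (Suc j)) * x j s + a (Suc j) * S (x j) s)"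
    and a01: "\<And>j. 0 < j \<Longrightarrow> 0 \<le> a j \<and> a j \<le> 1"
    and fixed: "S y = y"
    and pos: "0 < (\<Sum>i=1..n. a i * (1 - a i))"
  shows "supnorm (\<lambda>s. x n s - S (x n) s)
    \<le> 2 * supnorm (\<lambda>s. x 0 s - y s) / sqrt (pi * (\<Sum>i=1..n. a i * (1 - a i)))"
proof -
  let ?R = "supnorm (\<lambda>s. x 0 s - y s)"
  have dist_fixed: "supnorm (\<lambda>s. x m s - y s) \<le> ?R" for m
  proof (induction m)
    case (Suc m)
    have "supnorm (\<lambda>s. x (Suc m) s - y s)
        \<le> (1 - a (Suc m)) * supnorm (\<lambda>s. x m s - y s) + a (Suc m) * supnorm (\<lambda>s. S (x m) s - S y s)"
      unfolding iter fixed using a01[of "Suc m"] by (intro supnorm_convex_comb) auto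
    also have "\<dots> \<le> (1 - a (Suc m)) * ?R + a (Suc m) * ?R"
      using Suc nonexp[of "x m" y] a01[of "Suc m"] by (intro add_mono mult_left_mono) auto
    finally show ?case
      by (simp add: algebra_simps)
  qed simp
  have "supnorm (\<lambda>s. x 0 s - S (x m) s) \<le> 2 * ?R" for m
  proof (rule supnorm_least)
    fix s
    have "\<bar>S y s - S (x m) s\<bar> \<le> supnorm (\<lambda>s. x m s - y s)"
      using abs_le_supnorm[of "\<lambda>s. S y s - S (x m) s" s] nonexp[of y "x m"] supnorm_diff_commute[of y "x m"]
      by linarith
    then show "\<bar>x 0 s - S (x m) s\<bar> \<le> 2 * ?R"
      using abs_le_supnorm[of "\<lambda>s. x 0 s - y s" s] dist_fixed[of m] fixed by auto
  qed
  then have "supnorm (\<lambda>s. x n s - S (x n) s) \<le> 2 * ?R * km_coeff a n n (Suc 0)"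
    using km_error_bound[where S = S and x = x and a = a, OF nonexp iter a01] by blast
  also have "\<dots> \<le> 2 * ?R * (1 / sqrt (pi * (\<Sum>i=1..n. a i * (1 - a i))))"
    using km_coeff_diag_le[OF _ pos] a01 supnorm_nonneg by (intro mult_left_mono) auto
  finally show ?thesis
    by simp
qed

section \<open>Bellman operators\<close>

abbreviation P_act :: "('s::finite \<Rightarrow> 'a \<Rightarrow> 's \<Rightarrow> real) \<Rightarrow> 's \<Rightarrow> 'a \<Rightarrow> ('s \<Rightarrow> real) \<Rightarrow> real" where
  "P_act P s a v \<equiv> \<Sum>s'\<in>UNIV. P s a s' * v s'"

abbreviation q_value :: "('s::finite \<Rightarrow> 'a \<Rightarrow> 's \<Rightarrow> real) \<Rightarrow> ('s \<Rightarrow> 'a \<Rightarrow> real)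
    \<Rightarrow> ('s \<Rightarrow> real) \<Rightarrow> 's \<Rightarrow> 'a \<Rightarrow> real" where
  "q_value P r V s a \<equiv> r s a + P_act P s a V"

definition preserving_actions :: "('s::finite \<Rightarrow> 'a \<Rightarrow> 's \<Rightarrow> real) \<Rightarrow> ('s \<Rightarrow> real) \<Rightarrow> 's \<Rightarrow> 'a set" where
  "preserving_actions P g s = {a. P_act P s a g = g s}"

definition T_restr :: "('s::finite \<Rightarrow> 'a::finite \<Rightarrow> 's \<Rightarrow> real) \<Rightarrow> ('s \<Rightarrow> 'a \<Rightarrow> real)
    \<Rightarrow> ('s \<Rightarrow> real) \<Rightarrow> ('s \<Rightarrow> real) \<Rightarrow> 's \<Rightarrow> real" where
  "T_restr P r g V s = Max (q_value P r V s ` preserving_actions P g s)"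

lemma P_act_add_scaled:
  "P_act P s a (\<lambda>s. u s + c * v s) = P_act P s a u + c * P_act P s a v"
  by (simp add: sum.distrib sum_distrib_left algebra_simps)

lemma abs_P_act_le:
  assumes "is_mdp P"
  shows "\<bar>P_act P s a u\<bar> \<le> supnorm u"
proof -
  have "\<bar>P_act P s a u\<bar> \<le> (\<Sum>s'\<in>UNIV. P s a s' * supnorm u)"
    using assms unfolding is_mdp_def
    by (intro order_trans[OF sum_abs] sum_mono) (simp add: abs_mult mult_left_mono abs_le_supnorm)
  also have "\<dots> = supnorm u"
    using assms unfolding is_mdp_def by (simp add: sum_distrib_right[symmetric])
  finally show ?thesis .
qed

lemma abs_q_value_diff_le:
  assumes "is_mdp P"
  shows "\<bar>q_value P r u s a - q_value P r v s a\<bar> \<le> supnorm (\<lambda>s. u s - v s)"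
  using abs_P_act_le[OF assms, of s a "\<lambda>s. u s - v s"] by (simp add: sum_subtractf algebra_simps)

lemma q_value_le_T_opt: "q_value P r V s a \<le> T_opt P r V s"
  unfolding T_opt_def by (rule Max_ge) auto

lemma T_opt_le: "(\<And>a. q_value P r V s a \<le> M) \<Longrightarrow> T_opt P r V s \<le> M"
  unfolding T_opt_def by (subst Max_le_iff) auto

locale mdp_bellman =
  fixes P :: "'s::finite \<Rightarrow> 'a::finite \<Rightarrow> 's \<Rightarrow> real"
    and r :: "'s \<Rightarrow> 'a \<Rightarrow> real"
    and g h :: "'s \<Rightarrow> real"
  assumes mdp: "is_mdp P"
    and sol: "mod_bellman P r g h"
begin

lemma P_act_g_le: "P_act P s a g \<le> g s"
  using sol Max_ge[of "range (\<lambda>a. P_act P s a g)"] unfolding mod_bellman_def by fastforce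

lemma q_value_h_le: "q_value P r h s a \<le> h s + g s"
  using sol Max_ge[of "range (q_value P r h s)"] unfolding mod_bellman_def by fastforce

lemma optimal_preserving_action:
  obtains a where "a \<in> preserving_actions P g s" "q_value P r h s a = h s + g s"
  using sol unfolding mod_bellman_def preserving_actions_def by blast

lemma q_value_le_T_restr: "a \<in> preserving_actions P g s \<Longrightarrow> q_value P r V s a \<le> T_restr P r g V s"
  unfolding T_restr_def by (rule Max_ge) auto

lemma T_restr_le: "(\<And>a. a \<in> preserving_actions P g s \<Longrightarrow> q_value P r V s a \<le> M) \<Longrightarrow> T_restr P r g V s \<le> M"
  using optimal_preserving_action[of s] unfolding T_restr_def by (subst Max_le_iff) auto

lemma T_restr_le_T_opt: "T_restr P r g V s \<le> T_opt P r V s"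
  by (rule T_restr_le) (rule q_value_le_T_opt)

lemma T_restr_add_g: "T_restr P r g (\<lambda>s. u s + c * g s) s = T_restr P r g u s + c * g s"
proof (rule antisym)
  show "T_restr P r g (\<lambda>s. u s + c * g s) s \<le> T_restr P r g u s + c * g s"
    by (rule T_restr_le) (simp add: P_act_add_scaled preserving_actions_def q_value_le_T_restr)
  have "T_restr P r g u s \<le> T_restr P r g (\<lambda>s. u s + c * g s) s - c * g s"
  proof (rule T_restr_le)
    fix a
    assume a: "a \<in> preserving_actions P g s"
    then have "q_value P r (\<lambda>s. u s + c * g s) s a \<le> T_restr P r g (\<lambda>s. u s + c * g s) s"
      by (rule q_value_le_T_restr)
    with a show "q_value P r u s a \<le> T_restr P r g (\<lambda>s. u s + c * g s) s - c * g s"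
      by (simp add: P_act_add_scaled preserving_actions_def)
  qed
  then show "T_restr P r g u s + c * g s \<le> T_restr P r g (\<lambda>s. u s + c * g s) s"
    by simp
qed

lemma T_restr_nonexp: "\<bar>T_restr P r g u s - T_restr P r g v s\<bar> \<le> supnorm (\<lambda>s. u s - v s)"
proof -
  have one_side: "T_restr P r g u s \<le> T_restr P r g v s + supnorm (\<lambda>s. u s - v s)" for u v
  proof (rule T_restr_le)
    fix a
    assume "a \<in> preserving_actions P g s"
    then have "q_value P r v s a \<le> T_restr P r g v s"
      by (rule q_value_le_T_restr)
    then show "q_value P r u s a \<le> T_restr P r g v s + supnorm (\<lambda>s. u s - v s)"
      using abs_q_value_diff_le[OF mdp, where r = r and u = u and v = v and s = s and a = a] by linarith
  qed
  then show ?thesis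
    unfolding abs_le_iff using one_side[of u v] one_side[of v u] supnorm_diff_commute[of u v] by linarith
qed

lemma T_restr_h: "T_restr P r g h s = h s + g s"
proof (rule antisym)
  show "T_restr P r g h s \<le> h s + g s"
    by (rule T_restr_le) (rule q_value_h_le)
  obtain a where "a \<in> preserving_actions P g s" "q_value P r h s a = h s + g s"
    by (rule optimal_preserving_action)
  then show "h s + g s \<le> T_restr P r g h s"
    using q_value_le_T_restr[of a s h] by simp
qed

text \<open>The upper bound uses \<open>P g \<le> g\<close>; the lower bound uses an action that attains the Bellman
  equation for \<open>h\<close> and preserves \<open>g\<close>.\<close>
lemma T_opt_shift_dist_le:
  assumes "0 \<le> c"
  shows "\<bar>T_opt P r (\<lambda>s. w s + c * g s) s - c * g s - g s - h s\<bar> \<le> supnorm (\<lambda>s. w s - h s)"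
proof -
  let ?e = "supnorm (\<lambda>s. w s - h s)"
  have "T_opt P r (\<lambda>s. w s + c * g s) s \<le> h s + g s + ?e + c * g s"
  proof (rule T_opt_le)
    fix a
    have "q_value P r (\<lambda>s. w s + c * g s) s a = q_value P r w s a + c * P_act P s a g"
      by (simp add: P_act_add_scaled)
    also have "\<dots> \<le> q_value P r h s a + ?e + c * g s"
      using abs_q_value_diff_le[OF mdp, where r = r and u = w and v = h and s = s and a = a]
        mult_left_mono[OF P_act_g_le assms, of s a] by linarith
    also have "\<dots> \<le> h s + g s + ?e + c * g s"
      using q_value_h_le[of s a] by simp
    finally show "q_value P r (\<lambda>s. w s + c * g s) s a \<le> h s + g s + ?e + c * g s" .
  qed
  moreover obtain a where a: "a \<in> preserving_actions P g s" "q_value P r h s a = h s + g s"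
    by (rule optimal_preserving_action)
  then have "h s + g s - ?e + c * g s \<le> q_value P r (\<lambda>s. w s + c * g s) s a"
    using abs_q_value_diff_le[OF mdp, where r = r and u = w and v = h and s = s and a = a]
    by (simp add: P_act_add_scaled preserving_actions_def)
  then have "h s + g s - ?e + c * g s \<le> T_opt P r (\<lambda>s. w s + c * g s) s"
    using q_value_le_T_opt[where P = P and r = r and V = "\<lambda>s. w s + c * g s" and s = s and a = a] by linarith
  ultimately show ?thesis
    by (simp add: abs_le_iff)
qed

end

section \<open>Policies and their gain\<close>

lemma P_pol_eq: "P_pol P \<sigma> v s = (\<Sum>a\<in>UNIV. \<sigma> s a * P_act P s a v)"
  unfolding P_pol_def by (simp add: sum_distrib_right sum_distrib_left mult.assoc) (rule sum.swap)

lemma T_pol_eq: "T_pol P r \<sigma> V s = (\<Sum>a\<in>UNIV. \<sigma> s a * q_value P r V s a)"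
  unfolding T_pol_def r_pol_def P_pol_eq by (simp add: sum.distrib distrib_left)

lemma policy_avg_le:
  assumes "is_policy \<sigma>" and "\<And>a. \<sigma> s a \<noteq> 0 \<Longrightarrow> f a \<le> M"
  shows "(\<Sum>a\<in>UNIV. \<sigma> s a * f a) \<le> M"
proof -
  have "(\<Sum>a\<in>UNIV. \<sigma> s a * f a) \<le> (\<Sum>a\<in>UNIV. \<sigma> s a * M)"
  proof (rule sum_mono)
    fix a
    show "\<sigma> s a * f a \<le> \<sigma> s a * M"
      using assms unfolding is_policy_def by (cases "\<sigma> s a = 0") (auto intro: mult_left_mono)
  qed
  also have "\<dots> = M"
    using assms(1) unfolding is_policy_def by (simp add: sum_distrib_right[symmetric])
  finally show ?thesis .
qed

lemma policy_avg_eq: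
  assumes "is_policy \<sigma>" and "\<And>a. \<sigma> s a \<noteq> 0 \<Longrightarrow> f a = M"
  shows "(\<Sum>a\<in>UNIV. \<sigma> s a * f a) = M"
proof -
  have "(\<Sum>a\<in>UNIV. \<sigma> s a * f a) = (\<Sum>a\<in>UNIV. \<sigma> s a * M)"
    using assms(2) by (intro sum.cong) auto
  also have "\<dots> = M"
    using assms(1) unfolding is_policy_def by (simp add: sum_distrib_right[symmetric])
  finally show ?thesis .
qed

lemma policy_avg_eq_max_support:
  assumes pol: "is_policy \<sigma>" and le: "\<And>a. f a \<le> M" and avg: "(\<Sum>a\<in>UNIV. \<sigma> s a * f a) = M"
    and "\<sigma> s a \<noteq> 0"
  shows "f a = M"
proof -
  have "(\<Sum>a\<in>UNIV. \<sigma> s a * (M - f a)) = 0"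
    using avg policy_avg_eq[OF pol, where s = s and f = "\<lambda>_. M" and M = M]
    by (simp add: right_diff_distrib sum_subtractf)
  moreover have "0 \<le> \<sigma> s a * (M - f a)" for a
    using pol le[of a] unfolding is_policy_def by simp
  ultimately have "\<sigma> s a * (M - f a) = 0"
    by (simp add: sum_nonneg_eq_0_iff)
  with \<open>\<sigma> s a \<noteq> 0\<close> show ?thesis
    by simp
qed

lemma P_pol_add: "P_pol P \<sigma> (\<lambda>s. u s + v s) = (\<lambda>s. P_pol P \<sigma> u s + P_pol P \<sigma> v s)"
  unfolding P_pol_def by (simp add: sum.distrib distrib_left fun_eq_iff)

lemma P_pol_diff: "P_pol P \<sigma> (\<lambda>s. u s - v s) = (\<lambda>s. P_pol P \<sigma> u s - P_pol P \<sigma> v s)"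
  unfolding P_pol_def by (simp add: sum_subtractf right_diff_distrib fun_eq_iff)

lemma funpow_P_pol_add:
  "(P_pol P \<sigma> ^^ t) (\<lambda>s. u s + v s) = (\<lambda>s. (P_pol P \<sigma> ^^ t) u s + (P_pol P \<sigma> ^^ t) v s)"
  by (induction t) (simp_all add: P_pol_add)

lemma funpow_P_pol_diff:
  "(P_pol P \<sigma> ^^ t) (\<lambda>s. u s - v s) = (\<lambda>s. (P_pol P \<sigma> ^^ t) u s - (P_pol P \<sigma> ^^ t) v s)"
  by (induction t) (simp_all add: P_pol_diff)

lemma abs_P_pol_le:
  assumes "is_mdp P" and "is_policy \<sigma>"
  shows "\<bar>P_pol P \<sigma> u s\<bar> \<le> supnorm u"
proof -
  have "P_pol P \<sigma> u s \<le> supnorm u"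
    unfolding P_pol_eq using abs_P_act_le[OF assms(1)]
    by (intro policy_avg_le[OF assms(2)]) (auto simp: abs_le_iff)
  moreover have "- P_pol P \<sigma> u s = (\<Sum>a\<in>UNIV. \<sigma> s a * - P_act P s a u)"
    unfolding P_pol_eq by (simp add: sum_negf)
  moreover have "\<dots> \<le> supnorm u"
    using abs_P_act_le[OF assms(1)] by (intro policy_avg_le[OF assms(2)]) (auto simp: abs_le_iff)
  ultimately show ?thesis
    by linarith
qed

lemma abs_funpow_P_pol_le:
  assumes "is_mdp P" and "is_policy \<sigma>"
  shows "\<bar>(P_pol P \<sigma> ^^ t) u s\<bar> \<le> supnorm u"
proof (induction t arbitrary: s)
  case (Suc t)
  have "\<bar>(P_pol P \<sigma> ^^ Suc t) u s\<bar> \<le> supnorm ((P_pol P \<sigma> ^^ t) u)"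
    using abs_P_pol_le[OF assms] by simp
  also have "\<dots> \<le> supnorm u"
    using Suc.IH by (rule supnorm_least)
  finally show ?case .
qed (simp add: abs_le_supnorm)

lemma abs_diff_liminf_le:
  fixes f :: "nat \<Rightarrow> real"
  assumes "\<And>T. 1 \<le> T \<Longrightarrow> \<bar>f T - c\<bar> \<le> e + C / real T"
  shows "\<bar>c - real_of_ereal (liminf (\<lambda>T. ereal (f T)))\<bar> \<le> e"
proof -
  have close: "eventually (\<lambda>T. \<bar>f T - c\<bar> \<le> e + C / real T) sequentially"
    using assms eventually_sequentially by blast
  have lim: "(\<lambda>T. ereal (c + d * (e + C / real T))) \<longlonglongrightarrow> ereal (c + d * e)" for d
    by (intro tendsto_ereal) (auto intro!: tendsto_eq_intros lim_const_over_n)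
  have "ereal (c - e) = liminf (\<lambda>T. ereal (c + (- 1) * (e + C / real T)))"
    using lim_imp_Liminf[OF _ lim[of "- 1"]] by simp
  also have "\<dots> \<le> liminf (\<lambda>T. ereal (f T))"
    by (intro Liminf_mono eventually_mono[OF close]) (simp add: abs_le_iff)
  finally have lower: "ereal (c - e) \<le> liminf (\<lambda>T. ereal (f T))" .
  have "liminf (\<lambda>T. ereal (f T)) \<le> liminf (\<lambda>T. ereal (c + 1 * (e + C / real T)))"
    by (intro Liminf_mono eventually_mono[OF close]) (simp add: abs_le_iff)
  also have "\<dots> = ereal (c + e)"
    using lim_imp_Liminf[OF _ lim[of 1]] by simp
  finally have upper: "liminf (\<lambda>T. ereal (f T)) \<le> ereal (c + e)" .
  from lower upper show ?thesis
    by (cases "liminf (\<lambda>T. ereal (f T))") (auto simp: abs_le_iff)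
qed

lemma sum_rewards_telescope:
  assumes fixed: "P_pol P \<sigma> g = g"
  shows "(\<Sum>t<T. (P_pol P \<sigma> ^^ t) (r_pol r \<sigma>) s)
    = V s - (P_pol P \<sigma> ^^ T) V s + real T * g s
      + (\<Sum>t<T. (P_pol P \<sigma> ^^ t) (\<lambda>s. T_pol P r \<sigma> V s - V s - g s) s)"
proof -
  let ?M = "P_pol P \<sigma>"
  define d where "d = (\<lambda>s. T_pol P r \<sigma> V s - V s - g s)"
  have r_eq: "r_pol r \<sigma> = (\<lambda>s. (V s + g s + d s) - ?M V s)"
    by (simp add: fun_eq_iff d_def T_pol_def)
  have g_fixed: "(?M ^^ t) g = g" for t
    by (induction t) (simp_all add: fixed)
  have term_eq: "(?M ^^ t) (r_pol r \<sigma>) s = ((?M ^^ t) V s - (?M ^^ Suc t) V s) + g s + (?M ^^ t) d s" for t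
    unfolding r_eq funpow_P_pol_diff funpow_P_pol_add g_fixed by (simp add: funpow_swap1)
  show ?thesis
    unfolding d_def[symmetric] term_eq sum.distrib sum_lessThan_telescope'[of "\<lambda>t. (?M ^^ t) V s"] by simp
qed

lemma gain_error_le:
  assumes mdp: "is_mdp P" and pol: "is_policy \<sigma>" and fixed: "P_pol P \<sigma> g = g"
  shows "supnorm (\<lambda>s. g s - gain P r \<sigma> s) \<le> supnorm (\<lambda>s. T_pol P r \<sigma> V s - V s - g s)"
proof (rule supnorm_least)
  fix s
  let ?M = "P_pol P \<sigma>"
  define d where "d = (\<lambda>s. T_pol P r \<sigma> V s - V s - g s)"
  have "\<bar>(1 / real T) * (\<Sum>t<T. (?M ^^ t) (r_pol r \<sigma>) s) - g s\<bar> \<le> supnorm d + 2 * supnorm V / real T"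
    if "1 \<le> T" for T
  proof -
    have T_pos: "0 < real T"
      using that by simp
    have "\<bar>\<Sum>t<T. (?M ^^ t) d s\<bar> \<le> real T * supnorm d"
      using sum_bounded_above[of "{..<T}" "\<lambda>t. \<bar>(?M ^^ t) d s\<bar>" "supnorm d"] abs_funpow_P_pol_le[OF mdp pol]
      by (auto intro: order_trans[OF sum_abs])
    then have mean_d: "\<bar>(\<Sum>t<T. (?M ^^ t) d s) / real T\<bar> \<le> supnorm d"
      using T_pos by (simp add: abs_divide pos_divide_le_eq mult.commute)
    have "\<bar>V s - (?M ^^ T) V s\<bar> \<le> 2 * supnorm V"
      using abs_le_supnorm[of V s] abs_funpow_P_pol_le[OF mdp pol, of T V s] by linarith
    then have boundary: "\<bar>(V s - (?M ^^ T) V s) / real T\<bar> \<le> 2 * supnorm V / real T"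
      using T_pos by (simp add: abs_divide divide_right_mono)
    have "(1 / real T) * (\<Sum>t<T. (?M ^^ t) (r_pol r \<sigma>) s) - g s
        = (V s - (?M ^^ T) V s) / real T + (\<Sum>t<T. (?M ^^ t) d s) / real T"
      using T_pos
      by (simp add: sum_rewards_telescope[OF fixed, where T = T and s = s and V = V and r = r, folded d_def]
          field_simps)
    then show ?thesis
      using mean_d boundary abs_triangle_ineq[of "(V s - (?M ^^ T) V s) / real T" "(\<Sum>t<T. (?M ^^ t) d s) / real T"]
      by linarith
  qed
  then show "\<bar>g s - gain P r \<sigma> s\<bar> \<le> supnorm d"
    unfolding gain_def by (rule abs_diff_liminf_le)
qed

section \<open>Relaxed value iteration\<close>

lemma sum_atLeastAtMost_unbounded:
  fixes f :: "nat \<Rightarrow> real"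
  assumes nonneg: "\<And>i. 1 \<le> i \<Longrightarrow> 0 \<le> f i" and lower: "eventually (\<lambda>i. c \<le> f i) sequentially"
    and "0 < c"
  shows "\<exists>K. \<forall>k\<ge>K. B < (\<Sum>i=1..k. f i)"
proof -
  obtain N where N: "\<And>i. N \<le> i \<Longrightarrow> c \<le> f i"
    using lower unfolding eventually_sequentially by blast
  define K where "K = Suc N + nat \<lceil>B / c\<rceil>"
  have "B < (\<Sum>i=1..k. f i)" if "K \<le> k" for k
  proof -
    have "B \<le> real (nat \<lceil>B / c\<rceil>) * c"
      using real_nat_ceiling_ge[of "B / c"] \<open>0 < c\<close> by (simp add: pos_divide_le_eq)
    then have "B < (real (nat \<lceil>B / c\<rceil>) + 1) * c"
      using \<open>0 < c\<close> by (simp add: algebra_simps)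
    also have "\<dots> \<le> real (card {Suc N..k}) * c"
      using that \<open>0 < c\<close> unfolding K_def by (intro mult_right_mono) auto
    also have "\<dots> \<le> (\<Sum>i=Suc N..k. f i)"
      using N by (intro sum_bounded_below) auto
    also have "\<dots> \<le> (\<Sum>i=1..k. f i)"
      using nonneg by (intro sum_mono2) auto
    finally show ?thesis .
  qed
  then show ?thesis
    by blast
qed

lemma finite_positive_bounded_below:
  fixes f :: "'x::finite \<Rightarrow> real"
  obtains \<delta> where "0 < \<delta>" and "\<And>x. 0 < f x \<Longrightarrow> \<delta> \<le> f x"
proof
  show "0 < Min (insert 1 (f ` {x. 0 < f x}))"
    by (subst Min_gr_iff) auto
  show "Min (insert 1 (f ` {x. 0 < f x})) \<le> f x" if "0 < f x" for x
    using that by (intro Min_le) auto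
qed

locale relaxed_value_iteration = mdp_bellman P r g h
  for P :: "'s::finite \<Rightarrow> 'a::finite \<Rightarrow> 's \<Rightarrow> real" and r g h +
  fixes lam :: "nat \<Rightarrow> real"
    and V :: "nat \<Rightarrow> 's \<Rightarrow> real"
    and pol :: "nat \<Rightarrow> 's \<Rightarrow> 'a \<Rightarrow> real"
  assumes lam_pos: "\<And>j. j \<ge> 1 \<Longrightarrow> 0 < lam j"
    and lam_lt1: "\<And>j. j \<ge> 1 \<Longrightarrow> lam j < 1"
    and lam_limsup: "limsup (\<lambda>j. ereal (lam j)) < 1"
    and V_rec: "\<And>k. k \<ge> 1 \<Longrightarrow>
        V k = (\<lambda>s. lam k * V (k - 1) s + (1 - lam k) * T_opt P r (V (k - 1)) s)"
    and pol_pol: "\<And>k. is_policy (pol k)"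
    and greedy: "\<And>k. T_pol P r (pol k) (V k) = T_opt P r (V k)"
begin

definition drift :: "nat \<Rightarrow> real" where
  "drift k = (\<Sum>i=1..k. 1 - lam i)"

definition detrended :: "nat \<Rightarrow> 's \<Rightarrow> real" where
  "detrended k s = V k s - drift k * g s"

abbreviation init_dist :: real where
  "init_dist \<equiv> supnorm (\<lambda>s. V 0 s - h s)"

lemma drift_nonneg: "0 \<le> drift k"
  unfolding drift_def using lam_lt1 by (intro sum_nonneg) (simp add: less_imp_le)

lemma detrended_Suc:
  "detrended (Suc k) s = lam (Suc k) * detrended k s + (1 - lam (Suc k)) * (T_opt P r (V k) s - drift k * g s - g s)"
  using V_rec[of "Suc k"] by (simp add: detrended_def drift_def algebra_simps)

lemma detrended_dist_le: "supnorm (\<lambda>s. detrended k s - h s) \<le> init_dist"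
proof (induction k)
  case 0
  then show ?case
    by (simp add: detrended_def drift_def)
next
  case (Suc k)
  let ?b = "1 - lam (Suc k)"
  have b: "0 \<le> ?b" "?b \<le> 1"
    using lam_pos[of "Suc k"] lam_lt1[of "Suc k"] by auto
  have "supnorm (\<lambda>s. T_opt P r (V k) s - drift k * g s - g s - h s) \<le> supnorm (\<lambda>s. detrended k s - h s)"
  proof (rule supnorm_least)
    fix s
    have "(\<lambda>s. detrended k s + drift k * g s) = V k"
      by (simp add: detrended_def)
    then show "\<bar>T_opt P r (V k) s - drift k * g s - g s - h s\<bar> \<le> supnorm (\<lambda>s. detrended k s - h s)"
      using T_opt_shift_dist_le[OF drift_nonneg[of k], of "detrended k" s] by simp
  qed
  then have "?b * supnorm (\<lambda>s. T_opt P r (V k) s - drift k * g s - g s - h s) \<le> ?b * init_dist"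
    using Suc.IH b by (intro mult_left_mono) auto
  moreover have "supnorm (\<lambda>s. detrended (Suc k) s - h s)
      \<le> (1 - ?b) * supnorm (\<lambda>s. detrended k s - h s) + ?b * supnorm (\<lambda>s. T_opt P r (V k) s - drift k * g s - g s - h s)"
    using supnorm_convex_comb[OF b, of "detrended k" "\<lambda>s. T_opt P r (V k) s - drift k * g s - g s" h]
    by (simp add: detrended_Suc)
  moreover have "(1 - ?b) * supnorm (\<lambda>s. detrended k s - h s) \<le> (1 - ?b) * init_dist"
    using Suc.IH b by (intro mult_left_mono) auto
  ultimately show ?case
    by (simp add: algebra_simps)
qed

lemma drift_unbounded: "\<exists>K. \<forall>k\<ge>K. B < drift k"
proof -
  obtain z where z: "limsup (\<lambda>j. ereal (lam j)) < ereal z" and "z < 1"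
    using ereal_dense2[OF lam_limsup] by auto
  from z have "eventually (\<lambda>i. ereal (lam i) < ereal z) sequentially"
    by (rule Limsup_lessD)
  then have lower: "eventually (\<lambda>i. 1 - z \<le> 1 - lam i) sequentially"
    by (rule eventually_mono) simp
  have "0 \<le> 1 - lam i" if "1 \<le> i" for i
    using lam_lt1[OF that] by simp
  from sum_atLeastAtMost_unbounded[OF this lower] \<open>z < 1\<close> show ?thesis
    unfolding drift_def by simp
qed

lemma greedy_action_optimal:
  assumes "pol k s a \<noteq> 0"
  shows "q_value P r (V k) s a = T_opt P r (V k) s"
proof -
  have "(\<Sum>a\<in>UNIV. pol k s a * q_value P r (V k) s a) = T_opt P r (V k) s"
    using greedy[of k] by (simp add: T_pol_eq[symmetric])
  then show ?thesis
    using policy_avg_eq_max_support[where f = "q_value P r (V k) s" and M = "T_opt P r (V k) s",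
        OF pol_pol q_value_le_T_opt _ assms]
    by blast
qed

lemma greedy_action_preserving:
  assumes gap: "\<And>s a. a \<notin> preserving_actions P g s \<Longrightarrow> P_act P s a g \<le> g s - \<delta>"
    and large: "2 * init_dist < drift k * \<delta>"
    and "pol k s a \<noteq> 0"
  shows "a \<in> preserving_actions P g s"
proof (rule ccontr)
  assume "a \<notin> preserving_actions P g s"
  have near: "\<bar>q_value P r (detrended k) s b - q_value P r h s b\<bar> \<le> init_dist" for b
    using abs_q_value_diff_le[OF mdp, where r = r and u = "detrended k" and v = h and s = s and a = b]
      detrended_dist_le[of k] by linarith
  have shift: "q_value P r (V k) s b = q_value P r (detrended k) s b + drift k * P_act P s b g" for b
    using P_act_add_scaled[of P s b "detrended k" "drift k" g] by (simp add: detrended_def)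
  obtain b where b: "b \<in> preserving_actions P g s" "q_value P r h s b = h s + g s"
    by (rule optimal_preserving_action)
  have "h s + g s - init_dist + drift k * g s \<le> q_value P r (V k) s b"
    using near[of b] shift[of b] b by (simp add: preserving_actions_def abs_le_iff)
  also have "\<dots> \<le> q_value P r (V k) s a"
    using greedy_action_optimal[OF \<open>pol k s a \<noteq> 0\<close>] q_value_le_T_opt[where P = P and r = r and V = "V k" and s = s and a = b]
    by linarith
  also have "\<dots> \<le> h s + g s + init_dist + drift k * (g s - \<delta>)"
    using near[of a] shift[of a] q_value_h_le[of s a]
      mult_left_mono[OF gap[OF \<open>a \<notin> preserving_actions P g s\<close>] drift_nonneg[of k]]
    by (simp add: abs_le_iff)
  finally show False
    using large by (simp add: algebra_simps)
qed

lemma eventually_preserving: "\<exists>K. \<forall>k\<ge>K. P_pol P (pol k) g = g"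
proof -
  define loss where "loss = (\<lambda>(s, a). g s - P_act P s a g)"
  obtain \<delta> where "0 < \<delta>" and \<delta>: "\<And>x. 0 < loss x \<Longrightarrow> \<delta> \<le> loss x"
    using finite_positive_bounded_below[of loss] by blast
  have gap: "P_act P s a g \<le> g s - \<delta>" if "a \<notin> preserving_actions P g s" for s a
    using that \<delta>[of "(s, a)"] P_act_g_le[of s a] by (simp add: loss_def preserving_actions_def)
  obtain K where K: "\<And>k. K \<le> k \<Longrightarrow> 2 * init_dist / \<delta> < drift k"
    using drift_unbounded by blast
  have "P_pol P (pol k) g s = g s" if "K \<le> k" for k s
    unfolding P_pol_eq
  proof (rule policy_avg_eq[OF pol_pol])
    show "P_act P s a g = g s" if "pol k s a \<noteq> 0" for a
      using greedy_action_preserving[OF gap _ that] K[OF \<open>K \<le> k\<close>] \<open>0 < \<delta>\<close>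
      by (simp add: preserving_actions_def pos_divide_less_eq)
  qed
  then show ?thesis
    by blast
qed

lemma T_opt_eq_T_restr:
  assumes fixed: "P_pol P (pol k) g = g"
  shows "T_opt P r (V k) s = T_restr P r g (detrended k) s + drift k * g s"
proof -
  have avg: "(\<Sum>a\<in>UNIV. pol k s a * P_act P s a g) = g s"
    using fun_cong[OF fixed, of s] by (simp add: P_pol_eq)
  have "q_value P r (V k) s a \<le> T_restr P r g (V k) s" if "pol k s a \<noteq> 0" for a
  proof (rule q_value_le_T_restr)
    show "a \<in> preserving_actions P g s"
      using policy_avg_eq_max_support[where f = "\<lambda>a. P_act P s a g" and M = "g s", OF pol_pol P_act_g_le avg that]
      by (simp add: preserving_actions_def)
  qed
  then have "T_pol P r (pol k) (V k) s \<le> T_restr P r g (V k) s"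
    unfolding T_pol_eq by (rule policy_avg_le[OF pol_pol])
  then have "T_opt P r (V k) s = T_restr P r g (V k) s"
    unfolding greedy using T_restr_le_T_opt[where V = "V k" and s = s] by (rule antisym)
  also have "\<dots> = T_restr P r g (detrended k) s + drift k * g s"
    using T_restr_add_g[of "detrended k" "drift k" s] by (simp add: detrended_def)
  finally show ?thesis .
qed

lemma residual_le:
  assumes fixed: "\<And>k. K \<le> k \<Longrightarrow> P_pol P (pol k) g = g" and "K < k"
  shows "supnorm (\<lambda>s. T_opt P r (V k) s - V k s - g s)
    \<le> 2 * init_dist / sqrt (pi * (\<Sum>i=K+1..k. lam i * (1 - lam i)))"
proof -
  define S where "S = (\<lambda>u s. T_restr P r g u s - g s)"
  define x where "x = (\<lambda>j. detrended (K + j))"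
  define a where "a = (\<lambda>j. 1 - lam (K + j))"
  define n where "n = k - K"
  have k: "k = K + n" "0 < n"
    using \<open>K < k\<close> by (auto simp: n_def)
  have nonexp: "supnorm (\<lambda>s. S u s - S v s) \<le> supnorm (\<lambda>s. u s - v s)" for u v
    by (rule supnorm_least) (simp add: S_def T_restr_nonexp)
  have iter: "x (Suc j) = (\<lambda>s. (1 - a (Suc j)) * x j s + a (Suc j) * S (x j) s)" for j
    using T_opt_eq_T_restr[OF fixed[of "K + j"]] by (simp add: fun_eq_iff x_def a_def S_def detrended_Suc)
  have a01: "0 \<le> a j \<and> a j \<le> 1" if "0 < j" for j
    using lam_pos[of "K + j"] lam_lt1[of "K + j"] that by (simp add: a_def)
  have "S h = h"
    by (simp add: S_def T_restr_h fun_eq_iff)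
  have sum_eq: "(\<Sum>i=1..n. a i * (1 - a i)) = (\<Sum>i=K+1..k. lam i * (1 - lam i))"
    unfolding k a_def using sum.shift_bounds_cl_nat_ivl[of "\<lambda>i. lam i * (1 - lam i)" 1 K n]
    by (simp add: add.commute mult.commute)
  have lam_sum_pos: "0 < (\<Sum>i=K+1..k. lam i * (1 - lam i))"
    using \<open>K < k\<close> lam_pos lam_lt1 by (intro sum_pos) auto
  then have pos: "0 < (\<Sum>i=1..n. a i * (1 - a i))"
    unfolding sum_eq .
  have residual: "(\<lambda>s. T_opt P r (V k) s - V k s - g s) = (\<lambda>s. S (x n) s - x n s)"
    using T_opt_eq_T_restr[OF fixed[of k]] \<open>K < k\<close>
    by (simp add: fun_eq_iff x_def S_def detrended_def k(1)[symmetric])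
  have "supnorm (\<lambda>s. T_opt P r (V k) s - V k s - g s) = supnorm (\<lambda>s. x n s - S (x n) s)"
    unfolding residual by (rule supnorm_diff_commute)
  also have "\<dots> \<le> 2 * supnorm (\<lambda>s. x 0 s - h s) / sqrt (pi * (\<Sum>i=1..n. a i * (1 - a i)))"
    by (rule km_residual_le[OF nonexp iter a01 \<open>S h = h\<close> pos])
  also have "\<dots> \<le> 2 * init_dist / sqrt (pi * (\<Sum>i=K+1..k. lam i * (1 - lam i)))"
    unfolding sum_eq using detrended_dist_le[of K] lam_sum_pos by (intro divide_right_mono) (auto simp: x_def)
  finally show ?thesis .
qed

end

theorem theorem8:
  fixes P :: "'s::finite \<Rightarrow> 'a::finite \<Rightarrow> 's \<Rightarrow> real"
    and r :: "'s \<Rightarrow> 'a \<Rightarrow> real"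
    and g h :: "'s \<Rightarrow> real"
    and lam :: "nat \<Rightarrow> real"
    and V :: "nat \<Rightarrow> 's \<Rightarrow> real"
    and pol :: "nat \<Rightarrow> 's \<Rightarrow> 'a \<Rightarrow> real"
  assumes mdp: "is_mdp P"
    and sol: "mod_bellman P r g h"
    and lam_pos: "\<And>j. j \<ge> 1 \<Longrightarrow> 0 < lam j"
    and lam_lt1: "\<And>j. j \<ge> 1 \<Longrightarrow> lam j < 1"
    and lam_limsup: "limsup (\<lambda>j. ereal (lam j)) < 1"
    and V_rec: "\<And>k. k \<ge> 1 \<Longrightarrow>
        V k = (\<lambda>s. lam k * V (k - 1) s + (1 - lam k) * T_opt P r (V (k - 1)) s)"
    and pol_pol: "\<And>k. is_policy (pol k)"
    and greedy: "\<And>k. T_pol P r (pol k) (V k) = T_opt P r (V k)"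
  shows "(\<exists>K::nat. \<forall>k\<ge>K. P_pol P (pol k) g = g) \<and>
         (let K = (LEAST K::nat. \<forall>k\<ge>K. P_pol P (pol k) g = g) in
          \<forall>k>K.
            supnorm (\<lambda>s. g s - gain P r (pol k) s)
              \<le> supnorm (\<lambda>s. T_opt P r (V k) s - V k s - g s) \<and>
            supnorm (\<lambda>s. T_opt P r (V k) s - V k s - g s)
              \<le> 2 * supnorm (\<lambda>s. V 0 s - h s)
                 / sqrt (pi * (\<Sum>i=K+1..k. lam i * (1 - lam i))))"
proof -
  interpret relaxed_value_iteration P r g h lam V pol
    by unfold_locales (fact assms)+
  have ex: "\<exists>K. \<forall>k\<ge>K. P_pol P (pol k) g = g"
    by (rule eventually_preserving)
  define K where "K = (LEAST K. \<forall>k\<ge>K. P_pol P (pol k) g = g)"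
  have fixed: "\<And>k. K \<le> k \<Longrightarrow> P_pol P (pol k) g = g"
    using LeastI_ex[OF ex] unfolding K_def[symmetric] by blast
  have "supnorm (\<lambda>s. g s - gain P r (pol k) s) \<le> supnorm (\<lambda>s. T_opt P r (V k) s - V k s - g s) \<and>
      supnorm (\<lambda>s. T_opt P r (V k) s - V k s - g s)
        \<le> 2 * supnorm (\<lambda>s. V 0 s - h s) / sqrt (pi * (\<Sum>i=K+1..k. lam i * (1 - lam i)))"
    if "K < k" for k
  proof
    have "P_pol P (pol k) g = g"
      using fixed that by simp
    from gain_error_le[OF mdp pol_pol this, of r "V k"]
    show "supnorm (\<lambda>s. g s - gain P r (pol k) s) \<le> supnorm (\<lambda>s. T_opt P r (V k) s - V k s - g s)"
      unfolding greedy .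
    show "supnorm (\<lambda>s. T_opt P r (V k) s - V k s - g s)
        \<le> 2 * supnorm (\<lambda>s. V 0 s - h s) / sqrt (pi * (\<Sum>i=K+1..k. lam i * (1 - lam i)))"
      using fixed that by (rule residual_le)
  qed
  then show ?thesis
    unfolding Let_def K_def[symmetric] using ex by blast
qed

end
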